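(* Let $G=(V,E)$ be a finite simple graph, let $\mathbf{v}=(v_e)_{e\in E}$ and $\mathbf{w}=(w_i)_{i\in V}$ be indeterminates, let $q$ be an indeterminate, and let $\mathbf{x}=(x_i)_{i\in V}$ be commuting indeterminates. Then, as formal power series in $\mathbf{x}$ (with all sums over $\mathbf{n}\in\mathbb{N}^V$), \[ \sum_{\mathbf{n}} Z_{G[\mathbf{n}]}(q,\mathbf{v})\,\frac{\mathbf{x}^{\mathbf{n}}}{\mathbf{n}!} =\left(\sum_{\mathbf{n}}\Bigl(\prod_{ij\in E}(1+v_{ij})^{n_in_j}\Bigr)\frac{\mathbf{x}^{\mathbf{n}}}{\mathbf{n}!}\right)^{q} \] and \[ \sum_{\mathbf{n}} Z_{G'[\mathbf{n}]}(q,\mathbf{v},\mathbf{w})\,\frac{\mathbf{x}^{\mathbf{n}}}{\mathbf{n}!} =\left(\sum_{\mathbf{n}}\Bigl(\prod_{ij\in E}(1+v_{ij})^{n_in_j}\Bigr)\Bigl(\prod_{i\in V}(1+w_i)^{n_i(n_i-1)/2}\Bigr)\frac{\mathbf{x}^{\mathbf{n}}}{\mathbf{n}!}\right)^{q}. \]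
   Context: For a finite graph $H$ with edge weights $(v_e)_{e\in E(H)}$, the multivariate Tutte polynomial is $Z_H(q,\mathbf{v})=\sum_{A\subseteq E(H)} q^{k(A)}\prod_{e\in A}v_e$, where $k(A)$ is the number of connected components of the spanning subgraph $(V(H),A)$; for the empty graph (no vertices) $Z=1$. For $\mathbf{n}\in\mathbb{N}^V$ write $\mathbf{x}^{\mathbf{n}}=\prod_i x_i^{n_i}$ and $\mathbf{n}!=\prod_i n_i!$. $G[\mathbf{n}]$ is the graph with vertex set $\{(i,\alpha): i\in V,\ \alpha\in[n_i]\}$ and an edge $\langle(i,\alpha),(j,\beta)\rangle$ of weight $v_{ij}$ for every $ij\in E$, $\alpha\in[n_i]$, $\beta\in[n_j]$ (each vertex $i$ is blown up into an independent set of size $n_i$). $G'[\mathbf{n}]$ has the same vertex set and the same edges, plus an edge $\langle(i,\alpha),(i,\beta)\rangle$ of weight $w_i$ for every $i\in V$ and $\alpha\ne\beta$ in $[n_i]$ (each vertex blown up into a clique); $Z_{G'[\mathbf{n}]}(q,\mathbf{v},\mathbf{w})$ is its multivariate Tutte polynomial with these weights. For a formal power series $F$ with constant term $1$, $F^q$ means $\exp(q\log F)$, a formal power series whose coefficients are polynomials in $q$. *)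

theory Defs
  imports Main
begin

text \<open>A formal power series in commuting indeterminates x_i (i :: 'v) with coefficients in 'a
  is represented by its coefficient function on exponent vectors n :: 'v \<Rightarrow> nat.\<close>

definition mfps_one :: "('v \<Rightarrow> nat) \<Rightarrow> 'a::comm_ring_1" where
  "mfps_one = (\<lambda>n. if n = (\<lambda>_. 0) then 1 else 0)"

definition mfps_mult :: "((('v::finite) \<Rightarrow> nat) \<Rightarrow> 'a) \<Rightarrow> (('v \<Rightarrow> nat) \<Rightarrow> 'a) \<Rightarrow> ('v \<Rightarrow> nat) \<Rightarrow> 'a::comm_ring_1"
  where "mfps_mult f g = (\<lambda>n. \<Sum>m\<in>{m. \<forall>i. m i \<le> n i}. f m * g (\<lambda>i. n i - m i))"

fun mfps_pow :: "((('v::finite) \<Rightarrow> nat) \<Rightarrow> 'a) \<Rightarrow> nat \<Rightarrow> ('v \<Rightarrow> nat) \<Rightarrow> 'a::comm_ring_1" where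
  "mfps_pow f 0 = mfps_one"
| "mfps_pow f (Suc k) = mfps_mult f (mfps_pow f k)"

definition mdeg :: "(('v::finite) \<Rightarrow> nat) \<Rightarrow> nat" where
  "mdeg n = (\<Sum>i\<in>UNIV. n i)"

text \<open>log F = \<Sum>_{k\<ge>1} (-1)^(k+1) (F-1)^k / k, for F with constant term 1.  Since (F-1)^k only has
  monomials of total degree \<ge> k, the coefficient at n is the finite sum over k \<le> deg n.\<close>
definition mfps_log :: "((('v::finite) \<Rightarrow> nat) \<Rightarrow> 'a::field_char_0) \<Rightarrow> ('v \<Rightarrow> nat) \<Rightarrow> 'a" where
  "mfps_log F = (\<lambda>n. \<Sum>k\<in>{1..mdeg n}.
      (-1) ^ (k + 1) / of_nat k * mfps_pow (\<lambda>m. F m - mfps_one m) k n)"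

text \<open>exp H = \<Sum>_{k\<ge>0} H^k / k!, for H with constant term 0 (finite coefficientwise as above).\<close>
definition mfps_exp :: "((('v::finite) \<Rightarrow> nat) \<Rightarrow> 'a::field_char_0) \<Rightarrow> ('v \<Rightarrow> nat) \<Rightarrow> 'a" where
  "mfps_exp H = (\<lambda>n. \<Sum>k\<le>mdeg n. mfps_pow H k n / fact k)"

definition mfps_powr :: "((('v::finite) \<Rightarrow> nat) \<Rightarrow> 'a::field_char_0) \<Rightarrow> 'a \<Rightarrow> ('v \<Rightarrow> nat) \<Rightarrow> 'a" where
  "mfps_powr F q = mfps_exp (\<lambda>n. q * mfps_log F n)"

text \<open>Number of connected components of the spanning subgraph (Vs, A); edges are 2-element sets.\<close>
definition num_comps :: "'u set \<Rightarrow> 'u set set \<Rightarrow> nat" where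
  "num_comps Vs A = card (Vs // ({(x, y). {x, y} \<in> A}\<^sup>* \<inter> Vs \<times> Vs))"

definition tutteZ :: "'u set \<Rightarrow> 'u set set \<Rightarrow> ('u set \<Rightarrow> 'a) \<Rightarrow> 'a \<Rightarrow> 'a::comm_ring_1" where
  "tutteZ Vs Es wt q = (\<Sum>A\<in>Pow Es. q ^ num_comps Vs A * (\<Prod>e\<in>A. wt e))"

definition blowV :: "('v \<Rightarrow> nat) \<Rightarrow> ('v \<times> nat) set" where
  "blowV n = {(i, a). a < n i}"

definition blowE :: "'v set set \<Rightarrow> ('v \<Rightarrow> nat) \<Rightarrow> ('v \<times> nat) set set" where
  "blowE E n = {{(i, a), (j, b)} | i j a b. {i, j} \<in> E \<and> a < n i \<and> b < n j}"

definition cliqueE :: "('v \<Rightarrow> nat) \<Rightarrow> ('v \<times> nat) set set" where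
  "cliqueE n = {{(i, a), (i, b)} | i a b. a < n i \<and> b < n i \<and> a \<noteq> b}"

text \<open>Weight of an edge of the blow-up: v_{ij} for an edge between blobs i \<noteq> j, w_i inside blob i.\<close>
definition blow_wt :: "('v set \<Rightarrow> 'a) \<Rightarrow> ('v \<Rightarrow> 'a) \<Rightarrow> ('v \<times> nat) set \<Rightarrow> 'a" where
  "blow_wt v w e = (if card (fst ` e) = 2 then v (fst ` e) else w (the_elem (fst ` e)))"

end

theory Submission
  imports
    Defs
    "HOL-Computational_Algebra.Formal_Power_Series"
    "HOL-Computational_Algebra.Polynomial"
    "HOL-Library.FuncSet"
begin

text \<open>For \<open>q = k\<close> a natural number, the Fortuin--Kasteleyn expansion writes the Tutte polynomial
  as a sum over \<open>k\<close>-colourings of the vertices of the product of \<open>1 + v\<^sub>e\<close> over the monochromatic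
  edges. In a blow-up, each colour class contributes a factor that depends only on how many copies
  of each vertex \<open>i\<close> it contains, namely the coefficient of \<open>x\<^sup>m/m!\<close> in the series \<open>F\<close> on the
  right-hand side; summing over colourings is the exponential formula, giving \<open>n!\<close> times the
  coefficient of \<open>x\<^sup>n\<close> in \<open>F\<^sup>k\<close>. Both sides have coefficients that are polynomials in \<open>q\<close>,
  so agreement at all natural numbers gives the identity. Formally, \<open>F\<^sup>q = exp (q log F)\<close> is
  identified with the binomial series \<open>(1 + X)\<^sup>q\<close> composed with \<open>F - 1\<close>, which specialises to
  \<open>F\<^sup>k\<close> at \<open>q = k\<close>.\<close>

unbundle fps_syntax

lemma finite_bounded_exponents: "finite {m::'v::finite \<Rightarrow> nat. \<forall>i. m i \<le> n i}"
proof -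
  have "{m::'v \<Rightarrow> nat. \<forall>i. m i \<le> n i} = PiE UNIV (\<lambda>i. {..n i})"
    by (auto simp: PiE_def extensional_def Pi_def)
  then show ?thesis by (simp add: finite_PiE)
qed

lemma mfps_mult_one_left: "mfps_mult mfps_one g = (g :: ('v::finite \<Rightarrow> nat) \<Rightarrow> 'a::comm_ring_1)"
proof
  fix n :: "'v \<Rightarrow> nat"
  have "mfps_mult mfps_one g n = (\<Sum>m\<in>{m. \<forall>i. m i \<le> n i}. if m = (\<lambda>_. 0) then g (\<lambda>i. n i - m i) else 0)"
    unfolding mfps_mult_def mfps_one_def by (intro sum.cong) auto
  also have "\<dots> = g n" by (subst sum.delta) (auto simp: finite_bounded_exponents)
  finally show "mfps_mult mfps_one g n = g n" .
qed

lemma mfps_mult_one_right: "mfps_mult g mfps_one = (g :: ('v::finite \<Rightarrow> nat) \<Rightarrow> 'a::comm_ring_1)"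
proof
  fix n :: "'v \<Rightarrow> nat"
  have "(\<lambda>i. n i - m i) = (\<lambda>_. 0) \<longleftrightarrow> m = n" if "\<forall>i. m i \<le> n i" for m
    using that by (auto simp: fun_eq_iff intro: antisym)
  then have "mfps_mult g mfps_one n = (\<Sum>m\<in>{m. \<forall>i. m i \<le> n i}. if m = n then g m else 0)"
    unfolding mfps_mult_def mfps_one_def by (intro sum.cong) auto
  also have "\<dots> = g n" by (subst sum.delta) (auto simp: finite_bounded_exponents)
  finally show "mfps_mult g mfps_one n = g n" .
qed

lemma mfps_mult_assoc:
  "mfps_mult f (mfps_mult g h) = mfps_mult (mfps_mult f g) (h :: ('v::finite \<Rightarrow> nat) \<Rightarrow> 'a::comm_ring_1)"
proof
  fix n :: "'v \<Rightarrow> nat"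
  let ?S1 = "Sigma {m. \<forall>i. m i \<le> n i} (\<lambda>a. {b. \<forall>i. b i \<le> n i - a i})"
  let ?S2 = "Sigma {m. \<forall>i. m i \<le> n i} (\<lambda>c. {a. \<forall>i. a i \<le> c i})"
  have "mfps_mult f (mfps_mult g h) n = (\<Sum>(a,b)\<in>?S1. f a * (g b * h (\<lambda>i. n i - a i - b i)))"
    unfolding mfps_mult_def sum_distrib_left
    by (rule sum.Sigma) (auto simp: finite_bounded_exponents)
  also have "\<dots> = (\<Sum>(c,a)\<in>?S2. (f a * g (\<lambda>i. c i - a i)) * h (\<lambda>i. n i - c i))"
    by (rule sum.reindex_bij_witness[where i = "\<lambda>(c,a). (a, \<lambda>i. c i - a i)"
          and j = "\<lambda>(a,b). (\<lambda>i. a i + b i, a)"])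
       (auto simp: fun_eq_iff le_diff_conv2 add.commute intro: le_trans diff_le_mono)
  also have "\<dots> = mfps_mult (mfps_mult f g) h n"
    unfolding mfps_mult_def sum_distrib_right
    by (rule sum.Sigma[symmetric]) (auto simp: finite_bounded_exponents)
  finally show "mfps_mult f (mfps_mult g h) n = mfps_mult (mfps_mult f g) h n" .
qed

lemma mfps_pow_add:
  "mfps_pow G (a + b) = mfps_mult (mfps_pow G a) (mfps_pow (G :: ('v::finite \<Rightarrow> nat) \<Rightarrow> 'a::comm_ring_1) b)"
  by (induction a) (simp_all add: mfps_mult_one_left mfps_mult_assoc)

lemma mfps_pow_const_mult:
  "mfps_pow (\<lambda>m. c * G m) k = (\<lambda>m. c ^ k * mfps_pow (G :: ('v::finite \<Rightarrow> nat) \<Rightarrow> 'a::comm_ring_1) k m)"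
  by (induction k) (auto simp: mfps_mult_def sum_distrib_left mult_ac fun_eq_iff)

lemma mdeg_diff_le: "mdeg (\<lambda>i. n i - m i) \<le> mdeg (n :: 'v::finite \<Rightarrow> nat)"
  unfolding mdeg_def by (intro sum_mono) auto

lemma mdeg_mono: "\<forall>i. m i \<le> n i \<Longrightarrow> mdeg m \<le> mdeg (n :: 'v::finite \<Rightarrow> nat)"
  unfolding mdeg_def by (intro sum_mono) auto

lemma mdeg_diff_less:
  fixes m n :: "'v::finite \<Rightarrow> nat"
  assumes "\<forall>i. m i \<le> n i" "m \<noteq> (\<lambda>_. 0)"
  shows "mdeg (\<lambda>i. n i - m i) < mdeg n"
proof -
  have "mdeg (\<lambda>i. n i - m i) + mdeg m = mdeg n"
    unfolding mdeg_def sum.distrib[symmetric] using assms(1) by (intro sum.cong) auto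
  moreover have "mdeg m \<noteq> 0"
    using assms(2) by (auto simp: mdeg_def fun_eq_iff)
  ultimately show ?thesis by linarith
qed

lemma mfps_pow_eq_0_if_mdeg_less:
  fixes G :: "('v::finite \<Rightarrow> nat) \<Rightarrow> 'a::comm_ring_1"
  assumes G0: "G (\<lambda>_. 0) = 0"
  shows "mdeg n < j \<Longrightarrow> mfps_pow G j n = 0"
proof (induction j arbitrary: n)
  case (Suc j)
  have "G m * mfps_pow G j (\<lambda>i. n i - m i) = 0" if "\<forall>i. m i \<le> n i" for m
  proof (cases "m = (\<lambda>_. 0)")
    case False
    then have "mdeg (\<lambda>i. n i - m i) < j" using mdeg_diff_less[OF that] Suc.prems by simp
    then show ?thesis using Suc.IH by simp
  qed (simp add: G0)
  then show ?case by (simp add: mfps_mult_def)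
qed simp

section \<open>Substituting a multivariate series into a univariate one\<close>

text \<open>For \<open>G\<close> without constant term, \<open>mfps_compose f G\<close> is \<open>f(G)\<close>; the coefficient at \<open>n\<close>
  only involves the powers \<open>G\<^sup>j\<close> with \<open>j \<le> mdeg n\<close>.\<close>

definition mfps_compose :: "'a::comm_ring_1 fps \<Rightarrow> (('v::finite \<Rightarrow> nat) \<Rightarrow> 'a) \<Rightarrow> ('v \<Rightarrow> nat) \<Rightarrow> 'a" where
  "mfps_compose f G = (\<lambda>n. \<Sum>j\<le>mdeg n. f $ j * mfps_pow G j n)"

lemma mfps_compose_eq_sum_upto:
  fixes G :: "('v::finite \<Rightarrow> nat) \<Rightarrow> 'a::comm_ring_1"
  assumes "G (\<lambda>_. 0) = 0" and "mdeg n \<le> N"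
  shows "mfps_compose f G n = (\<Sum>j\<le>N. f $ j * mfps_pow G j n)"
  unfolding mfps_compose_def
  by (rule sum.mono_neutral_left) (use assms in \<open>auto simp: mfps_pow_eq_0_if_mdeg_less\<close>)

lemma mfps_compose_mult:
  fixes G :: "('v::finite \<Rightarrow> nat) \<Rightarrow> 'a::comm_ring_1"
  assumes G0: "G (\<lambda>_. 0) = 0"
  shows "mfps_compose (f * g) G = mfps_mult (mfps_compose f G) (mfps_compose g G)"
proof
  fix n :: "'v \<Rightarrow> nat"
  define N where "N = mdeg n"
  define M where "M = {m::'v \<Rightarrow> nat. \<forall>i. m i \<le> n i}"
  define H where "H = (\<lambda>a b. f$a * g$b * mfps_pow G (a + b) n)"
  have H0: "H a b = 0" if "N < a + b" for a b
    using that mfps_pow_eq_0_if_mdeg_less[of G, OF G0, of n "a + b"] by (simp add: H_def N_def)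
  have "mfps_mult (mfps_compose f G) (mfps_compose g G) n
      = (\<Sum>m\<in>M. (\<Sum>a\<le>N. f$a * mfps_pow G a m) * (\<Sum>b\<le>N. g$b * mfps_pow G b (\<lambda>i. n i - m i)))"
    unfolding mfps_mult_def N_def M_def
    by (intro sum.cong refl arg_cong2[where f="(*)"] mfps_compose_eq_sum_upto G0 mdeg_mono mdeg_diff_le) auto
  also have "\<dots> = (\<Sum>m\<in>M. \<Sum>a\<le>N. \<Sum>b\<le>N. f$a * g$b * (mfps_pow G a m * mfps_pow G b (\<lambda>i. n i - m i)))"
    by (simp add: sum_product mult_ac)
  also have "\<dots> = (\<Sum>a\<le>N. \<Sum>b\<le>N. f$a * g$b * (\<Sum>m\<in>M. mfps_pow G a m * mfps_pow G b (\<lambda>i. n i - m i)))"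
    by (subst sum.swap) (simp add: sum.swap[of _ M] sum_distrib_left)
  also have "\<dots> = (\<Sum>(a,b)\<in>{..N} \<times> {..N}. H a b)"
    by (simp add: H_def mfps_pow_add mfps_mult_def M_def sum.cartesian_product)
  also have "\<dots> = (\<Sum>(a,b)\<in>{(a,b). a + b \<le> N}. H a b)"
    by (rule sum.mono_neutral_right) (auto intro!: H0)
  also have "\<dots> = (\<Sum>k\<le>N. \<Sum>a\<le>k. H a (k - a))"
    by (rule sum.triangle_reindex_eq)
  also have "\<dots> = mfps_compose (f * g) G n"
    by (simp add: mfps_compose_def N_def H_def fps_mult_nth atLeast0AtMost sum_distrib_right)
  finally show "mfps_compose (f * g) G n = mfps_mult (mfps_compose f G) (mfps_compose g G) n" ..
qed

lemma mfps_compose_one: "mfps_compose 1 (G :: ('v::finite \<Rightarrow> nat) \<Rightarrow> 'a::comm_ring_1) = mfps_one"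
proof
  fix n :: "'v \<Rightarrow> nat"
  have "mfps_compose 1 G n = (\<Sum>j\<le>mdeg n. if j = 0 then mfps_pow G j n else 0)"
    unfolding mfps_compose_def by (intro sum.cong) auto
  then show "mfps_compose 1 G n = mfps_one n" by simp
qed

lemma mfps_compose_power:
  fixes G :: "('v::finite \<Rightarrow> nat) \<Rightarrow> 'a::comm_ring_1"
  assumes "G (\<lambda>_. 0) = 0"
  shows "mfps_compose (h ^ j) G = mfps_pow (mfps_compose h G) j"
  by (induction j) (simp_all add: mfps_compose_one mfps_compose_mult assms)

lemma mfps_compose_const_mult: "mfps_compose (fps_const c * f) G n = c * mfps_compose f G n"
  by (simp add: mfps_compose_def sum_distrib_left mult.assoc)

lemma mfps_compose_fps_compose:
  fixes G :: "('v::finite \<Rightarrow> nat) \<Rightarrow> 'a::comm_ring_1"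
  assumes G0: "G (\<lambda>_. 0) = 0" and h0: "h $ 0 = 0"
  shows "mfps_compose (f oo h) G = mfps_compose f (mfps_compose h G)"
proof
  fix n :: "'v \<Rightarrow> nat"
  define N where "N = mdeg n"
  have "mfps_compose f (mfps_compose h G) n = (\<Sum>j\<le>N. f$j * mfps_compose (h^j) G n)"
    by (simp only: mfps_compose_def[of f] N_def mfps_compose_power[of G, OF G0])
  also have "\<dots> = (\<Sum>j\<le>N. \<Sum>i\<le>N. f$j * (h^j)$i * mfps_pow G i n)"
    by (simp add: mfps_compose_eq_sum_upto[of G, OF G0 order.refl] N_def sum_distrib_left mult.assoc)
  also have "\<dots> = (\<Sum>i\<le>N. \<Sum>j\<le>i. f$j * (h^j)$i * mfps_pow G i n)"
    by (subst sum.swap, intro sum.cong refl sum.mono_neutral_right)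
       (auto simp: startsby_zero_power_prefix[OF h0])
  also have "\<dots> = mfps_compose (f oo h) G n"
    by (simp add: mfps_compose_def N_def fps_compose_nth atLeast0AtMost sum_distrib_right)
  finally show "mfps_compose (f oo h) G n = mfps_compose f (mfps_compose h G) n" ..
qed

lemma fps_exp_compose_const_mult_ln:
  "fps_exp (1::'a::field_char_0) oo (fps_const c * fps_ln 1) = fps_binomial c"
proof -
  let ?g = "fps_const c * fps_ln (1::'a)"
  let ?a = "fps_exp 1 oo ?g"
  have "fps_deriv ?a = ?a * (fps_const c * inverse (1 + fps_X))"
    by (simp add: fps_compose_deriv fps_ln_deriv)
  then have "fps_deriv ?a = fps_const c * ?a / (1 + fps_X)"
    by (simp add: fps_divide_unit ac_simps)
  moreover have "?a $ 0 = 1" by simp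
  ultimately show ?thesis using fps_binomial_ODE_unique' by blast
qed

lemma mfps_exp_eq_compose: "mfps_exp (H :: ('v::finite \<Rightarrow> nat) \<Rightarrow> 'a::field_char_0) = mfps_compose (fps_exp 1) H"
  by (simp add: mfps_compose_def mfps_exp_def fun_eq_iff)

lemma mfps_log_eq_compose:
  "mfps_log (F :: ('v::finite \<Rightarrow> nat) \<Rightarrow> 'a::field_char_0) = mfps_compose (fps_ln 1) (\<lambda>m. F m - mfps_one m)"
proof
  fix n :: "'v \<Rightarrow> nat"
  let ?G = "\<lambda>m. F m - mfps_one m"
  have "mfps_compose (fps_ln 1) ?G n = (\<Sum>j\<in>{0..mdeg n}. fps_ln 1 $ j * mfps_pow ?G j n)"
    by (simp add: mfps_compose_def atLeast0AtMost)
  also have "\<dots> = (\<Sum>j\<in>{1..mdeg n}. fps_ln 1 $ j * mfps_pow ?G j n)"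
    by (subst sum.atLeast_Suc_atMost) simp_all
  also have "\<dots> = mfps_log F n"
    unfolding mfps_log_def by (intro sum.cong refl) (auto simp: fps_ln_nth Suc_le_eq dest!: gr0_implies_Suc)
  finally show "mfps_log F n = mfps_compose (fps_ln 1) ?G n" ..
qed

lemma mfps_powr_eq_compose_binomial:
  fixes F :: "('v::finite \<Rightarrow> nat) \<Rightarrow> 'a::field_char_0"
  assumes "F (\<lambda>_. 0) = 1"
  shows "mfps_powr F q = mfps_compose (fps_binomial q) (\<lambda>m. F m - mfps_one m)"
proof -
  define G where "G = (\<lambda>m. F m - mfps_one m)"
  have G0: "G (\<lambda>_. 0) = 0" using assms by (simp add: G_def mfps_one_def)
  have "(\<lambda>n. q * mfps_log F n) = mfps_compose (fps_const q * fps_ln 1) G"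
    by (simp add: fun_eq_iff mfps_compose_const_mult mfps_log_eq_compose G_def)
  then have "mfps_powr F q = mfps_compose (fps_exp 1) (mfps_compose (fps_const q * fps_ln 1) G)"
    by (simp add: mfps_powr_def mfps_exp_eq_compose)
  also have "\<dots> = mfps_compose (fps_binomial q) G"
    by (simp add: mfps_compose_fps_compose[of G, OF G0, symmetric] fps_exp_compose_const_mult_ln)
  finally show ?thesis by (simp add: G_def)
qed

lemma mfps_powr_of_nat:
  fixes F :: "('v::finite \<Rightarrow> nat) \<Rightarrow> 'a::field_char_0"
  assumes F0: "F (\<lambda>_. 0) = 1"
  shows "mfps_powr F (of_nat k) = mfps_pow F k"
proof -
  define G where "G = (\<lambda>m. F m - mfps_one m)"
  have G0: "G (\<lambda>_. 0) = 0" using F0 by (simp add: G_def mfps_one_def)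
  have "mfps_compose (1 + fps_X) G = F"
  proof
    fix n :: "'v \<Rightarrow> nat"
    have "mfps_compose (1 + fps_X) G n = (\<Sum>j\<le>Suc (mdeg n). (1 + fps_X) $ j * mfps_pow G j n)"
      by (rule mfps_compose_eq_sum_upto[of G, OF G0]) simp
    also have "\<dots> = (\<Sum>j\<le>Suc (mdeg n). (if j = 0 then mfps_pow G j n else 0)
                                        + (if j = 1 then mfps_pow G j n else 0))"
      by (intro sum.cong refl) (auto simp: fps_X_nth)
    also have "\<dots> = F n"
      by (simp add: sum.distrib mfps_mult_one_right G_def)
    finally show "mfps_compose (1 + fps_X) G n = F n" .
  qed
  then show ?thesis
    by (simp add: mfps_powr_eq_compose_binomial[of F, OF F0] fps_binomial_of_nat mfps_compose_power[of G, OF G0]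
        flip: G_def)
qed

lemma mfps_powr_eq_poly:
  "mfps_powr (F :: ('v::finite \<Rightarrow> nat) \<Rightarrow> 'a::field_char_0) q n
     = poly (\<Sum>j\<le>mdeg n. monom (mfps_pow (mfps_log F) j n / fact j) j) q"
  by (simp add: mfps_powr_def mfps_exp_def mfps_pow_const_mult poly_sum poly_monom mult_ac)

lemma poly_eqI_of_nat:
  fixes p p' :: "'a::{idom, ring_char_0} poly"
  assumes "\<And>k. poly p (of_nat k) = poly p' (of_nat k)"
  shows "p = p'"
proof (rule ccontr)
  assume "p \<noteq> p'"
  then have "finite {x. poly (p - p') x = 0}" by (intro poly_roots_finite) simp
  moreover have "range (of_nat :: nat \<Rightarrow> 'a) \<subseteq> {x. poly (p - p') x = 0}"
    using assms by auto
  ultimately show False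
    using infinite_UNIV_char_0 range_inj_infinite[of "of_nat :: nat \<Rightarrow> 'a"] finite_subset
    by (auto simp: inj_on_def)
qed

section \<open>The Tutte polynomial at positive integers\<close>

lemma card_PiE_respecting:
  assumes R: "equiv A R" and fin: "finite A"
  shows "card {c \<in> A \<rightarrow>\<^sub>E B. \<forall>(x, y)\<in>R. c x = c y} = card B ^ card (A // R)"
proof -
  define rep where "rep X = (SOME x. x \<in> X)" for X :: "'a set"
  have rep: "rep X \<in> A" "R``{rep X} = X" if "X \<in> A // R" for X
  proof -
    obtain x where X: "X = R``{x}" "x \<in> A" using \<open>X \<in> A // R\<close> by (rule quotientE)
    then have "rep X \<in> X" unfolding rep_def using equiv_class_self[OF R] by (metis someI)
    then show "rep X \<in> A" "R``{rep X} = X"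
      using X R by (auto simp: equiv_class_eq_iff dest: equiv_class_eq)
  qed
  let ?C = "{c \<in> A \<rightarrow>\<^sub>E B. \<forall>(x, y)\<in>R. c x = c y}"
  have "bij_betw (\<lambda>g. \<lambda>x\<in>A. g (R``{x})) (A // R \<rightarrow>\<^sub>E B) ?C"
  proof (rule bij_betw_byWitness[where f' = "\<lambda>c. \<lambda>X\<in>A // R. c (rep X)"])
    show "\<forall>g\<in>A // R \<rightarrow>\<^sub>E B. (\<lambda>X\<in>A // R. (\<lambda>x\<in>A. g (R``{x})) (rep X)) = g"
      by (intro ballI extensionalityI[where A = "A // R"]) (simp_all add: rep PiE_iff)
    have "c (rep (R``{x})) = c x" if "c \<in> ?C" "x \<in> A" for c x
    proof -
      have "R``{rep (R``{x})} = R``{x}" using rep(2) quotientI[OF that(2)] .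
      then have "(rep (R``{x}), x) \<in> R"
        using R rep(1)[OF quotientI[OF that(2)]] that(2) by (simp add: equiv_class_eq_iff)
      then show ?thesis using that(1) by auto
    qed
    then show "\<forall>c\<in>?C. (\<lambda>x\<in>A. (\<lambda>X\<in>A // R. c (rep X)) (R``{x})) = c"
      by (auto simp: PiE_iff extensional_def fun_eq_iff quotientI)
    show "(\<lambda>g. \<lambda>x\<in>A. g (R``{x})) ` (A // R \<rightarrow>\<^sub>E B) \<subseteq> ?C"
      using R by (auto simp: PiE_iff quotientI equiv_class_eq_iff dest: equiv_class_eq)
    show "(\<lambda>c. \<lambda>X\<in>A // R. c (rep X)) ` ?C \<subseteq> A // R \<rightarrow>\<^sub>E B"
      using rep by (auto simp: PiE_iff)
  qed
  then have "card ?C = card (A // R \<rightarrow>\<^sub>E B)" by (simp add: bij_betw_same_card)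
  also have "\<dots> = card B ^ card (A // R)"
    by (simp add: card_PiE finite_quotient[OF fin equiv_type[OF R]])
  finally show ?thesis .
qed

lemma equiv_components: "equiv Vs ({(x, y). {x, y} \<in> A}\<^sup>* \<inter> Vs \<times> Vs)"
proof (rule equivI)
  have "sym {(x, y). {x, y} \<in> A}" by (auto simp: sym_def insert_commute)
  from sym_rtrancl[OF this] show "sym ({(x, y). {x, y} \<in> A}\<^sup>* \<inter> Vs \<times> Vs)"
    by (auto simp: sym_def)
qed (auto simp: refl_on_def trans_def intro: rtrancl_trans)

lemma constant_on_edges_iff_constant_on_components:
  assumes "\<forall>e\<in>A. \<exists>x y. e = {x, y} \<and> x \<in> Vs \<and> y \<in> Vs"
  shows "(\<forall>e\<in>A. \<forall>x\<in>e. \<forall>y\<in>e. c x = c y)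
     \<longleftrightarrow> (\<forall>(x, y)\<in>{(x, y). {x, y} \<in> A}\<^sup>* \<inter> Vs \<times> Vs. c x = c y)"
proof
  assume const: "\<forall>e\<in>A. \<forall>x\<in>e. \<forall>y\<in>e. c x = c y"
  have "c x = c y" if "(x, y) \<in> {(x, y). {x, y} \<in> A}\<^sup>*" for x y
    using that by (induction rule: rtrancl_induct) (use const in auto)
  then show "\<forall>(x, y)\<in>{(x, y). {x, y} \<in> A}\<^sup>* \<inter> Vs \<times> Vs. c x = c y" by auto
next
  assume const: "\<forall>(x, y)\<in>{(x, y). {x, y} \<in> A}\<^sup>* \<inter> Vs \<times> Vs. c x = c y"
  show "\<forall>e\<in>A. \<forall>x\<in>e. \<forall>y\<in>e. c x = c y"
  proof (intro ballI)
    fix e x y assume "e \<in> A" "x \<in> e" "y \<in> e"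
    moreover obtain a b where "e = {a, b}" "a \<in> Vs" "b \<in> Vs" using assms \<open>e \<in> A\<close> by blast
    ultimately have "x = y \<or> (x, y) \<in> {(x, y). {x, y} \<in> A}\<^sup>* \<inter> Vs \<times> Vs"
      by (auto simp: insert_commute)
    then show "c x = c y" using const by auto
  qed
qed

lemma card_colourings_constant_on_edges:
  assumes "finite Vs" and "\<forall>e\<in>A. \<exists>x y. e = {x, y} \<and> x \<in> Vs \<and> y \<in> Vs"
  shows "card {c \<in> Vs \<rightarrow>\<^sub>E {0..<k}. \<forall>e\<in>A. \<forall>x\<in>e. \<forall>y\<in>e. c x = c y} = k ^ num_comps Vs A"
  using card_PiE_respecting[OF equiv_components assms(1), where B = "{0..<k}"]
  by (simp add: constant_on_edges_iff_constant_on_components[OF assms(2)] num_comps_def)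

lemma tutteZ_of_nat:
  fixes wt :: "'u set \<Rightarrow> 'a::comm_ring_1"
  assumes fin: "finite Vs" and Es: "\<forall>e\<in>Es. \<exists>x y. e = {x, y} \<and> x \<in> Vs \<and> y \<in> Vs"
  shows "tutteZ Vs Es wt (of_nat k)
           = (\<Sum>c \<in> Vs \<rightarrow>\<^sub>E {0..<k}. \<Prod>e\<in>{e\<in>Es. \<forall>x\<in>e. \<forall>y\<in>e. c x = c y}. 1 + wt e)"
proof -
  define C where "C = Vs \<rightarrow>\<^sub>E {0..<k}"
  define monochromatic where "monochromatic c e \<longleftrightarrow> (\<forall>x\<in>e. \<forall>y\<in>e. c x = c y)" for c :: "'u \<Rightarrow> nat" and e
  have finEs: "finite Es" using Es by (intro finite_subset[of Es "Pow Vs"]) (auto simp: fin)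
  have "tutteZ Vs Es wt (of_nat k) = (\<Sum>A\<in>Pow Es. of_nat (card {c \<in> C. \<forall>e\<in>A. monochromatic c e}) * (\<Prod>e\<in>A. wt e))"
    unfolding tutteZ_def C_def monochromatic_def using Es
    by (intro sum.cong refl) (simp add: card_colourings_constant_on_edges[OF fin] subset_iff)
  also have "\<dots> = (\<Sum>A\<in>Pow Es. \<Sum>c\<in>{c. c \<in> C \<and> (\<forall>e\<in>A. monochromatic c e)}. \<Prod>e\<in>A. wt e)"
    by simp
  also have "\<dots> = (\<Sum>c\<in>C. \<Sum>A\<in>{A. A \<in> Pow Es \<and> (\<forall>e\<in>A. monochromatic c e)}. \<Prod>e\<in>A. wt e)"
    by (rule sum.swap_restrict) (simp_all add: finEs C_def fin finite_PiE)
  also have "\<dots> = (\<Sum>c\<in>C. \<Prod>e\<in>{e\<in>Es. monochromatic c e}. 1 + wt e)"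
  proof (intro sum.cong refl)
    fix c
    have "{A. A \<in> Pow Es \<and> (\<forall>e\<in>A. monochromatic c e)} = Pow {e\<in>Es. monochromatic c e}" by auto
    then show "(\<Sum>A\<in>{A. A \<in> Pow Es \<and> (\<forall>e\<in>A. monochromatic c e)}. \<Prod>e\<in>A. wt e) = (\<Prod>e\<in>{e\<in>Es. monochromatic c e}. 1 + wt e)"
      using prod_add[of "{e\<in>Es. monochromatic c e}" wt "\<lambda>_. 1"] finEs by (simp add: add.commute)
  qed
  finally show ?thesis by (simp add: C_def monochromatic_def)
qed

text \<open>Blow-up edges induced on a set \<open>U\<close> of vertex copies \<open>(i, a)\<close>; the flag selects \<open>G'[n]\<close>.\<close>

definition blow_edges :: "bool \<Rightarrow> 'v set set \<Rightarrow> ('v \<times> nat) set \<Rightarrow> ('v \<times> nat) set set" where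
  "blow_edges cliques E U = {{x, y} | x y. x \<in> U \<and> y \<in> U
      \<and> ({fst x, fst y} \<in> E \<or> (cliques \<and> fst x = fst y \<and> x \<noteq> y))}"

definition fibre_sizes :: "('v \<times> nat) set \<Rightarrow> 'v \<Rightarrow> nat" where
  "fibre_sizes U = (\<lambda>i. card {x\<in>U. fst x = i})"

definition blowup_weight ::
    "bool \<Rightarrow> 'v set set \<Rightarrow> ('v set \<Rightarrow> 'a) \<Rightarrow> ('v \<Rightarrow> 'a) \<Rightarrow> ('v::finite \<Rightarrow> nat) \<Rightarrow> 'a::comm_ring_1" where
  "blowup_weight cliques E v w m = (\<Prod>e\<in>E. (1 + v e) ^ (\<Prod>i\<in>e. m i))
     * (if cliques then \<Prod>i\<in>UNIV. (1 + w i) ^ (m i * (m i - 1) div 2) else 1)"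

lemma blow_edgesI:
  assumes "x \<in> U" "y \<in> U" "{fst x, fst y} \<in> E \<or> (cliques \<and> fst x = fst y \<and> x \<noteq> y)"
  shows "{x, y} \<in> blow_edges cliques E U"
  unfolding blow_edges_def using assms by blast

lemma blow_edgesE:
  assumes "e \<in> blow_edges cliques E U"
  obtains x y where "e = {x, y}" "x \<in> U" "y \<in> U" "{fst x, fst y} \<in> E \<or> (cliques \<and> fst x = fst y \<and> x \<noteq> y)"
  using assms unfolding blow_edges_def by blast

lemma finite_blow_edges: "finite U \<Longrightarrow> finite (blow_edges cliques E U)"
  by (rule finite_subset[of _ "Pow U"]) (auto simp: blow_edges_def)

lemma card_edges_between_fibres:
  assumes "finite U" "i \<noteq> j"
  shows "card {{x, y} | x y. x \<in> U \<and> y \<in> U \<and> fst x = i \<and> fst y = j} = fibre_sizes U i * fibre_sizes U j"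
proof -
  have "{{x, y} | x y. x \<in> U \<and> y \<in> U \<and> fst x = i \<and> fst y = j}
      = (\<lambda>(x, y). {x, y}) ` ({x\<in>U. fst x = i} \<times> {y\<in>U. fst y = j})"
    by (auto simp: image_iff) blast
  moreover have "inj_on (\<lambda>(x, y). {x, y}) ({x\<in>U. fst x = i} \<times> {y\<in>U. fst y = j})"
    using assms(2) by (auto simp: inj_on_def doubleton_eq_iff)
  ultimately show ?thesis
    by (simp add: card_image card_cartesian_product fibre_sizes_def)
qed

lemma prod_edges_between_fibres:
  fixes U :: "('v::finite \<times> nat) set" and v :: "'v set \<Rightarrow> 'a::comm_ring_1"
  assumes fin: "finite U" and simple: "\<forall>e\<in>E. card e = 2"
  shows "(\<Prod>e\<in>{{x, y} | x y. x \<in> U \<and> y \<in> U \<and> {fst x, fst y} \<in> E}. 1 + blow_wt v w e)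
         = (\<Prod>e\<in>E. (1 + v e) ^ (\<Prod>i\<in>e. fibre_sizes U i))"
proof -
  define cross where "cross = {{x, y} | x y. x \<in> U \<and> y \<in> U \<and> {fst x, fst y} \<in> E}"
  define P where "P e0 = {e\<in>cross. fst ` e = e0}" for e0
  have finP: "finite (P e0)" for e0
    by (rule finite_subset[of _ "Pow U"]) (auto simp: P_def cross_def fin)
  have "cross = (\<Union>e0\<in>E. P e0)"
    by (auto simp: P_def cross_def) blast
  moreover have "P e0 \<inter> P e1 = {}" if "e0 \<noteq> e1" for e0 e1
    using that by (auto simp: P_def)
  ultimately have "(\<Prod>e\<in>cross. 1 + blow_wt v w e) = (\<Prod>e0\<in>E. \<Prod>e\<in>P e0. 1 + blow_wt v w e)"
    by (simp add: prod.UNION_disjoint finP)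
  also have "\<dots> = (\<Prod>e0\<in>E. (1 + v e0) ^ (\<Prod>i\<in>e0. fibre_sizes U i))"
  proof (rule prod.cong[OF refl])
    fix e0 assume "e0 \<in> E"
    then obtain i j where ij: "e0 = {i, j}" "i \<noteq> j" using simple card_2_iff by metis
    have P: "P e0 = {{x, y} | x y. x \<in> U \<and> y \<in> U \<and> fst x = i \<and> fst y = j}"
    proof (intro equalityI subsetI)
      fix e assume "e \<in> P e0"
      then obtain x y where e: "e = {x, y}" "x \<in> U" "y \<in> U" "{fst x, fst y} = {i, j}"
        unfolding P_def cross_def ij by blast
      then have "e = {y, x}" by blast
      from e(4) consider "fst x = i" "fst y = j" | "fst y = i" "fst x = j"
        by (auto simp: doubleton_eq_iff)
      then show "e \<in> {{x, y} | x y. x \<in> U \<and> y \<in> U \<and> fst x = i \<and> fst y = j}"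
        by cases (use e \<open>e = {y, x}\<close> in blast)+
    qed (use \<open>e0 \<in> E\<close> ij in \<open>auto simp: P_def cross_def\<close>)
    have "card (P e0) = (\<Prod>i\<in>e0. fibre_sizes U i)"
      unfolding P card_edges_between_fibres[OF fin ij(2)] using ij by simp
    moreover have "blow_wt v w e = v e0" if "e \<in> P e0" for e
      using that ij by (simp add: P_def blow_wt_def)
    ultimately show "(\<Prod>e\<in>P e0. 1 + blow_wt v w e) = (1 + v e0) ^ (\<Prod>i\<in>e0. fibre_sizes U i)"
      by simp
  qed
  finally show ?thesis by (simp add: cross_def)
qed

lemma prod_edges_within_fibres:
  fixes U :: "('v::finite \<times> nat) set" and w :: "'v \<Rightarrow> 'a::comm_ring_1"
  assumes fin: "finite U"
  shows "(\<Prod>e\<in>{{x, y} | x y. x \<in> U \<and> y \<in> U \<and> fst x = fst y \<and> x \<noteq> y}. 1 + blow_wt v w e)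
         = (\<Prod>i\<in>UNIV. (1 + w i) ^ (fibre_sizes U i * (fibre_sizes U i - 1) div 2))"
proof -
  define Q where "Q i = {S. S \<subseteq> {x\<in>U. fst x = i} \<and> card S = 2}" for i
  have finQ: "finite (Q i)" for i
    by (rule finite_subset[of _ "Pow U"]) (auto simp: Q_def fin)
  have "{{x, y} | x y. x \<in> U \<and> y \<in> U \<and> fst x = fst y \<and> x \<noteq> y} = (\<Union>i. Q i)"
    by (auto simp: Q_def card_2_iff) blast+
  moreover have "Q i \<inter> Q j = {}" if "i \<noteq> j" for i j
    using that by (auto simp: Q_def card_2_iff)
  ultimately have "(\<Prod>e\<in>{{x, y} | x y. x \<in> U \<and> y \<in> U \<and> fst x = fst y \<and> x \<noteq> y}. 1 + blow_wt v w e)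
      = (\<Prod>i\<in>UNIV. \<Prod>e\<in>Q i. 1 + blow_wt v w e)"
    by (simp add: prod.UNION_disjoint finQ)
  also have "\<dots> = (\<Prod>i\<in>UNIV. (1 + w i) ^ (fibre_sizes U i * (fibre_sizes U i - 1) div 2))"
  proof (rule prod.cong[OF refl])
    fix i :: 'v
    have "blow_wt v w e = w i" if "e \<in> Q i" for e
    proof -
      from that obtain x y where "e = {x, y}" "fst x = i" "fst y = i" by (auto simp: Q_def card_2_iff)
      then show ?thesis by (simp add: blow_wt_def)
    qed
    moreover have "card (Q i) = fibre_sizes U i * (fibre_sizes U i - 1) div 2"
      unfolding Q_def fibre_sizes_def by (simp add: n_subsets fin choose_two)
    ultimately show "(\<Prod>e\<in>Q i. 1 + blow_wt v w e) = (1 + w i) ^ (fibre_sizes U i * (fibre_sizes U i - 1) div 2)"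
      by simp
  qed
  finally show ?thesis .
qed

lemma prod_blow_edges:
  fixes U :: "('v::finite \<times> nat) set" and v :: "'v set \<Rightarrow> 'a::comm_ring_1"
  assumes fin: "finite U" and simple: "\<forall>e\<in>E. card e = 2"
  shows "(\<Prod>e\<in>blow_edges cliques E U. 1 + blow_wt v w e) = blowup_weight cliques E v w (fibre_sizes U)"
proof -
  define cross where "cross = {{x, y} | x y. x \<in> U \<and> y \<in> U \<and> {fst x, fst y} \<in> E}"
  define inner where "inner = {{x, y} | x y. x \<in> U \<and> y \<in> U \<and> fst x = fst y \<and> x \<noteq> y}"
  have "finite cross" "finite inner"
    by (rule finite_subset[of _ "Pow U"], auto simp: cross_def inner_def fin)+
  moreover have "cross \<inter> inner = {}"
    using simple by (fastforce simp: cross_def inner_def doubleton_eq_iff)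
  moreover have "blow_edges cliques E U = cross \<union> (if cliques then inner else {})"
    unfolding cross_def inner_def blow_edges_def by auto
  ultimately show ?thesis
    using prod_edges_between_fibres[OF fin simple, of v w] prod_edges_within_fibres[OF fin, of v w]
    by (simp add: prod.union_disjoint blowup_weight_def cross_def inner_def)
qed

lemma prod_monochromatic_blow_edges:
  fixes k :: nat
  assumes fin: "finite U" and c: "c \<in> U \<rightarrow>\<^sub>E {0..<k}"
  shows "(\<Prod>e\<in>{e\<in>blow_edges cliques E U. \<forall>x\<in>e. \<forall>y\<in>e. c x = c y}. wt e)
       = (\<Prod>l<k. \<Prod>e\<in>blow_edges cliques E {x\<in>U. c x = l}. wt e)"
proof -
  have split: "{e\<in>blow_edges cliques E U. \<forall>x\<in>e. \<forall>y\<in>e. c x = c y} = (\<Union>l<k. blow_edges cliques E {x\<in>U. c x = l})"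
  proof (intro equalityI subsetI)
    fix e assume "e \<in> {e\<in>blow_edges cliques E U. \<forall>x\<in>e. \<forall>y\<in>e. c x = c y}"
    then obtain x y where e: "e = {x, y}" "x \<in> U" "y \<in> U" "c x = c y"
        "{fst x, fst y} \<in> E \<or> (cliques \<and> fst x = fst y \<and> x \<noteq> y)"
      by (auto elim!: blow_edgesE)
    moreover have "c x < k" using PiE_mem[OF c e(2)] by simp
    ultimately show "e \<in> (\<Union>l<k. blow_edges cliques E {x\<in>U. c x = l})"
      by (auto intro!: blow_edgesI)
  qed (auto elim!: blow_edgesE intro!: blow_edgesI)
  have disjoint: "blow_edges cliques E {x\<in>U. c x = l} \<inter> blow_edges cliques E {x\<in>U. c x = l'} = {}"
    if "l \<noteq> l'" for l l'
    using that by (fastforce elim!: blow_edgesE simp: doubleton_eq_iff)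
  show ?thesis
    unfolding split by (rule prod.UNION_disjoint) (auto simp: finite_blow_edges fin disjoint)
qed

section \<open>The exponential formula\<close>

lemma fibre_sizes_mono: "finite U \<Longrightarrow> T \<subseteq> U \<Longrightarrow> fibre_sizes T i \<le> fibre_sizes U i"
  unfolding fibre_sizes_def by (rule card_mono) auto

lemma fibre_sizes_Diff:
  assumes "finite U" "T \<subseteq> U"
  shows "fibre_sizes (U - T) = (\<lambda>i. fibre_sizes U i - fibre_sizes T i)"
proof
  fix i
  have "{x \<in> U - T. fst x = i} = {x\<in>U. fst x = i} - {x\<in>T. fst x = i}" by auto
  then show "fibre_sizes (U - T) i = fibre_sizes U i - fibre_sizes T i"
    using assms unfolding fibre_sizes_def by (simp add: card_Diff_subset finite_subset subset_iff)
qed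

lemma card_subsets_with_fibre_sizes:
  fixes U :: "('v::finite \<times> nat) set"
  assumes "finite U"
  shows "card {T. T \<subseteq> U \<and> fibre_sizes T = m} = (\<Prod>i\<in>UNIV. fibre_sizes U i choose m i)"
proof -
  let ?F = "\<lambda>i. {S. S \<subseteq> {x\<in>U. fst x = i} \<and> card S = m i}"
  have "bij_betw (\<lambda>T i. {x\<in>T. fst x = i}) {T. T \<subseteq> U \<and> fibre_sizes T = m} (PiE UNIV ?F)"
  proof (rule bij_betw_byWitness[where f' = "\<lambda>S. \<Union>i. S i"])
    show "\<forall>T\<in>{T. T \<subseteq> U \<and> fibre_sizes T = m}. (\<Union>i. {x\<in>T. fst x = i}) = T"
      by auto
    have fibres: "{x \<in> \<Union>(range S). fst x = i} = S i" if "S \<in> PiE UNIV ?F" for S i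
      using that by (fastforce simp: PiE_iff)
    then show "\<forall>S\<in>PiE UNIV ?F. (\<lambda>i. {x \<in> \<Union>(range S). fst x = i}) = S"
      by auto
    show "(\<lambda>T i. {x\<in>T. fst x = i}) ` {T. T \<subseteq> U \<and> fibre_sizes T = m} \<subseteq> PiE UNIV ?F"
      by (auto simp: fibre_sizes_def)
    show "(\<lambda>S. \<Union>i. S i) ` PiE UNIV ?F \<subseteq> {T. T \<subseteq> U \<and> fibre_sizes T = m}"
      using fibres by (fastforce simp: PiE_iff fibre_sizes_def)
  qed
  then have "card {T. T \<subseteq> U \<and> fibre_sizes T = m} = card (PiE UNIV ?F)"
    by (rule bij_betw_same_card)
  also have "\<dots> = (\<Prod>i\<in>UNIV. fibre_sizes U i choose m i)"
    using assms by (simp add: card_PiE n_subsets fibre_sizes_def)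
  finally show ?thesis .
qed

lemma sum_subsets_by_fibre_sizes:
  fixes U :: "('v::finite \<times> nat) set"
  assumes "finite U"
  shows "(\<Sum>T\<in>Pow U. g (fibre_sizes T) :: 'a::comm_semiring_1)
       = (\<Sum>m\<in>{m. \<forall>i. m i \<le> fibre_sizes U i}. of_nat (\<Prod>i\<in>UNIV. fibre_sizes U i choose m i) * g m)"
proof -
  have "(\<Sum>T\<in>Pow U. g (fibre_sizes T))
      = (\<Sum>m\<in>{m. \<forall>i. m i \<le> fibre_sizes U i}. \<Sum>T\<in>{T\<in>Pow U. fibre_sizes T = m}. g (fibre_sizes T))"
    using assms by (intro sum.group[symmetric]) (auto simp: finite_bounded_exponents fibre_sizes_mono)
  also have "\<dots> = (\<Sum>m\<in>{m. \<forall>i. m i \<le> fibre_sizes U i}. of_nat (card {T. T \<subseteq> U \<and> fibre_sizes T = m}) * g m)"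
    by (intro sum.cong refl) (simp add: Pow_def conj_commute)
  finally show ?thesis by (simp add: card_subsets_with_fibre_sizes assms)
qed

lemma of_nat_prod_choose:
  fixes m n :: "'v::finite \<Rightarrow> nat"
  assumes "\<forall>i. m i \<le> n i"
  shows "of_nat (\<Prod>i\<in>UNIV. n i choose m i)
       = (\<Prod>i\<in>UNIV. fact (n i)) / ((\<Prod>i\<in>UNIV. fact (m i)) * (\<Prod>i\<in>UNIV. fact (n i - m i)) :: 'a::field_char_0)"
  using assms by (simp add: of_nat_prod binomial_fact prod_dividef prod.distrib)

text \<open>Splitting off the last colour class, a colouring with \<open>k + 1\<close> colours is a set \<open>T\<close>
  together with a colouring of the rest with \<open>k\<close> colours.\<close>

lemma bij_betw_colourings_Suc:
  fixes U :: "'u set" and k :: nat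
  shows "bij_betw (\<lambda>c. ({x\<in>U. c x = k}, restrict c (U - {x\<in>U. c x = k})))
           (U \<rightarrow>\<^sub>E {0..<Suc k}) (Sigma (Pow U) (\<lambda>T. (U - T) \<rightarrow>\<^sub>E {0..<k}))"
proof (rule bij_betw_byWitness[where f' = "\<lambda>(T, c) x. if x \<in> T then k else c x"])
  show "\<forall>c\<in>U \<rightarrow>\<^sub>E {0..<Suc k}. (\<lambda>(T, c) x. if x \<in> T then k else c x)
          ({x\<in>U. c x = k}, restrict c (U - {x\<in>U. c x = k})) = c"
  proof (intro ballI ext)
    fix c x assume "c \<in> U \<rightarrow>\<^sub>E {0..<Suc k}"
    then show "(\<lambda>(T, c) x. if x \<in> T then k else c x) ({x\<in>U. c x = k}, restrict c (U - {x\<in>U. c x = k})) x = c x"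
      using PiE_arb[of c U _ x] by (cases "x \<in> U") auto
  qed
  show "(\<lambda>c. ({x\<in>U. c x = k}, restrict c (U - {x\<in>U. c x = k}))) ` (U \<rightarrow>\<^sub>E {0..<Suc k})
          \<subseteq> Sigma (Pow U) (\<lambda>T. (U - T) \<rightarrow>\<^sub>E {0..<k})"
    by (fastforce simp: PiE_iff less_Suc_eq)
  have join: "(\<lambda>x. if x \<in> T then k else c x) \<in> U \<rightarrow>\<^sub>E {0..<Suc k}"
    "{x\<in>U. (if x \<in> T then k else c x) = k} = T"
    "restrict (\<lambda>x. if x \<in> T then k else c x) (U - T) = c"
    if T: "T \<subseteq> U" and c: "c \<in> (U - T) \<rightarrow>\<^sub>E {0..<k}" for T c
  proof -
    have less: "c x < k" if "x \<in> U - T" for x using PiE_mem[OF c that] by simp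
    have arb: "c x = undefined" if "x \<notin> U - T" for x using PiE_arb[OF c that] .
    show "(\<lambda>x. if x \<in> T then k else c x) \<in> U \<rightarrow>\<^sub>E {0..<Suc k}"
      using T less arb by (auto simp: PiE_iff extensional_def less_Suc_eq)
    show "{x\<in>U. (if x \<in> T then k else c x) = k} = T"
      using T less by (auto intro: less_irrefl_nat)
    show "restrict (\<lambda>x. if x \<in> T then k else c x) (U - T) = c"
      using arb by (auto simp: fun_eq_iff)
  qed
  show "\<forall>p\<in>Sigma (Pow U) (\<lambda>T. (U - T) \<rightarrow>\<^sub>E {0..<k}). (\<lambda>c. ({x\<in>U. c x = k}, restrict c (U - {x\<in>U. c x = k})))
          ((\<lambda>(T, c) x. if x \<in> T then k else c x) p) = p"
    using join(2,3) by auto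
  show "(\<lambda>(T, c) x. if x \<in> T then k else c x) ` Sigma (Pow U) (\<lambda>T. (U - T) \<rightarrow>\<^sub>E {0..<k})
          \<subseteq> U \<rightarrow>\<^sub>E {0..<Suc k}"
    using join(1) by auto
qed

lemma sum_colourings_Suc:
  fixes U :: "'u set" and F :: "'u set \<Rightarrow> 'a::comm_semiring_1" and k :: nat
  assumes "finite U"
  shows "(\<Sum>c\<in>U \<rightarrow>\<^sub>E {0..<Suc k}. \<Prod>l<Suc k. F {x\<in>U. c x = l})
       = (\<Sum>T\<in>Pow U. F T * (\<Sum>c\<in>(U - T) \<rightarrow>\<^sub>E {0..<k}. \<Prod>l<k. F {x\<in>U - T. c x = l}))"
proof -
  have "(\<Prod>l<k. F {x \<in> U - {x\<in>U. c x = k}. restrict c (U - {x\<in>U. c x = k}) x = l})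
      = (\<Prod>l<k. F {x\<in>U. c x = l})" for c :: "'u \<Rightarrow> nat"
    by (intro prod.cong refl arg_cong[where f = F]) auto
  then have "(\<Sum>c\<in>U \<rightarrow>\<^sub>E {0..<Suc k}. \<Prod>l<Suc k. F {x\<in>U. c x = l})
      = (\<Sum>(T, c)\<in>Sigma (Pow U) (\<lambda>T. (U - T) \<rightarrow>\<^sub>E {0..<k}). F T * (\<Prod>l<k. F {x\<in>U - T. c x = l}))"
    by (simp add: sum.reindex_bij_betw[OF bij_betw_colourings_Suc, symmetric] mult.commute)
  also have "\<dots> = (\<Sum>T\<in>Pow U. F T * (\<Sum>c\<in>(U - T) \<rightarrow>\<^sub>E {0..<k}. \<Prod>l<k. F {x\<in>U - T. c x = l}))"
    using assms by (simp add: sum.Sigma[symmetric] sum_distrib_left finite_PiE)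
  finally show ?thesis .
qed

lemma fibre_sizes_eq_0_iff: "finite U \<Longrightarrow> fibre_sizes U = (\<lambda>_. 0) \<longleftrightarrow> U = {}"
  by (auto simp: fibre_sizes_def fun_eq_iff)

lemma sum_colourings_prod_fibre_sizes:
  fixes U :: "('v::finite \<times> nat) set" and f :: "('v \<Rightarrow> nat) \<Rightarrow> 'a::field_char_0"
  assumes "finite U"
  shows "(\<Sum>c\<in>U \<rightarrow>\<^sub>E {0..<k}. \<Prod>l<k. f (fibre_sizes {x\<in>U. c x = l}))
       = (\<Prod>i\<in>UNIV. fact (fibre_sizes U i)) * mfps_pow (\<lambda>m. f m / (\<Prod>i\<in>UNIV. fact (m i))) k (fibre_sizes U)"
  using assms
proof (induction k arbitrary: U)
  case 0
  show ?case
  proof (cases "U = {}")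
    case False
    then have "U \<rightarrow>\<^sub>E ({}::nat set) = {}" by (auto simp: PiE_eq_empty_iff)
    with False 0 show ?thesis by (simp add: mfps_one_def fibre_sizes_eq_0_iff)
  qed (simp add: mfps_one_def fibre_sizes_def)
next
  case (Suc k)
  define P where "P = (\<lambda>m. f m / (\<Prod>i\<in>UNIV. fact (m i)))"
  define n where "n = fibre_sizes U"
  have "(\<Sum>c\<in>U \<rightarrow>\<^sub>E {0..<Suc k}. \<Prod>l<Suc k. f (fibre_sizes {x\<in>U. c x = l}))
      = (\<Sum>T\<in>Pow U. f (fibre_sizes T)
           * (\<Sum>c\<in>(U - T) \<rightarrow>\<^sub>E {0..<k}. \<Prod>l<k. f (fibre_sizes {x\<in>U - T. c x = l})))"
    by (rule sum_colourings_Suc[OF Suc.prems])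
  also have "\<dots> = (\<Sum>T\<in>Pow U. f (fibre_sizes T) * ((\<Prod>i\<in>UNIV. fact (n i - fibre_sizes T i))
                                   * mfps_pow P k (\<lambda>i. n i - fibre_sizes T i)))"
  proof (intro sum.cong refl)
    fix T assume "T \<in> Pow U"
    then have T: "T \<subseteq> U" and "finite (U - T)" using Suc.prems by auto
    from Suc.IH[OF this(2)] fibre_sizes_Diff[OF Suc.prems T]
    show "f (fibre_sizes T) * (\<Sum>c\<in>(U - T) \<rightarrow>\<^sub>E {0..<k}. \<Prod>l<k. f (fibre_sizes {x\<in>U - T. c x = l}))
        = f (fibre_sizes T) * ((\<Prod>i\<in>UNIV. fact (n i - fibre_sizes T i)) * mfps_pow P k (\<lambda>i. n i - fibre_sizes T i))"
      by (simp add: P_def n_def)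
  qed
  also have "\<dots> = (\<Sum>m\<in>{m. \<forall>i. m i \<le> n i}. of_nat (\<Prod>i\<in>UNIV. n i choose m i)
                      * (f m * ((\<Prod>i\<in>UNIV. fact (n i - m i)) * mfps_pow P k (\<lambda>i. n i - m i))))"
    unfolding n_def by (rule sum_subsets_by_fibre_sizes[OF Suc.prems])
  also have "\<dots> = (\<Sum>m\<in>{m. \<forall>i. m i \<le> n i}. (\<Prod>i\<in>UNIV. fact (n i)) * (P m * mfps_pow P k (\<lambda>i. n i - m i)))"
  proof (intro sum.cong refl)
    fix m assume "m \<in> {m. \<forall>i. m i \<le> n i}"
    then have "of_nat (\<Prod>i\<in>UNIV. n i choose m i)
        = (\<Prod>i\<in>UNIV. fact (n i)) / ((\<Prod>i\<in>UNIV. fact (m i)) * (\<Prod>i\<in>UNIV. fact (n i - m i)) :: 'a)"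
      by (intro of_nat_prod_choose) simp
    then show "of_nat (\<Prod>i\<in>UNIV. n i choose m i) * (f m * ((\<Prod>i\<in>UNIV. fact (n i - m i)) * mfps_pow P k (\<lambda>i. n i - m i)))
        = (\<Prod>i\<in>UNIV. fact (n i)) * (P m * mfps_pow P k (\<lambda>i. n i - m i))"
      by (simp add: P_def)
  qed
  also have "\<dots> = (\<Prod>i\<in>UNIV. fact (n i)) * mfps_pow P (Suc k) n"
    by (simp add: mfps_mult_def sum_distrib_left)
  finally show ?case by (simp add: n_def P_def)
qed

lemma finite_blowV: "finite (blowV (n :: 'v::finite \<Rightarrow> nat))"
proof -
  have "blowV n = Sigma UNIV (\<lambda>i. {..<n i})" by (auto simp: blowV_def)
  then show ?thesis by (simp add: finite_SigmaI)
qed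

lemma fibre_sizes_blowV: "fibre_sizes (blowV n) = n"
proof
  fix i
  have "{x \<in> blowV n. fst x = i} = {i} \<times> {..<n i}" by (auto simp: blowV_def)
  then show "fibre_sizes (blowV n) i = n i" by (simp add: fibre_sizes_def card_cartesian_product)
qed

lemma blowE_eq_blow_edges: "blowE E n = blow_edges False E (blowV n)"
  unfolding blowE_def blow_edges_def blowV_def by auto

lemma blowE_Un_cliqueE_eq_blow_edges: "blowE E n \<union> cliqueE n = blow_edges True E (blowV n)"
  unfolding blowE_def cliqueE_def blow_edges_def blowV_def by auto

lemma blowup_weight_0:
  assumes "\<forall>e\<in>E. card e = 2"
  shows "blowup_weight cliques E v w (\<lambda>_. 0) = 1"
  unfolding blowup_weight_def using assms by (simp add: prod.neutral)

lemma blowup_tutte_of_nat: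
  fixes E :: "'v::finite set set" and v :: "'v set \<Rightarrow> 'a::field_char_0"
  assumes simple: "\<forall>e\<in>E. card e = 2"
  shows "tutteZ (blowV n) (blow_edges cliques E (blowV n)) (blow_wt v w) (of_nat k) / (\<Prod>i\<in>UNIV. fact (n i))
       = mfps_powr (\<lambda>m. blowup_weight cliques E v w m / (\<Prod>i\<in>UNIV. fact (m i))) (of_nat k) n"
proof -
  define U where "U = blowV n"
  define F where "F = (\<lambda>m. blowup_weight cliques E v w m / (\<Prod>i\<in>UNIV. fact (m i)) :: 'a)"
  have finU: "finite U" by (simp add: U_def finite_blowV)
  have "tutteZ U (blow_edges cliques E U) (blow_wt v w) (of_nat k)
      = (\<Sum>c \<in> U \<rightarrow>\<^sub>E {0..<k}. \<Prod>e\<in>{e\<in>blow_edges cliques E U. \<forall>x\<in>e. \<forall>y\<in>e. c x = c y}. 1 + blow_wt v w e)"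
    using finU by (intro tutteZ_of_nat) (auto elim!: blow_edgesE)
  also have "\<dots> = (\<Sum>c \<in> U \<rightarrow>\<^sub>E {0..<k}. \<Prod>l<k. blowup_weight cliques E v w (fibre_sizes {x\<in>U. c x = l}))"
    using finU simple
    by (intro sum.cong refl) (simp add: prod_monochromatic_blow_edges prod_blow_edges)
  also have "\<dots> = (\<Prod>i\<in>UNIV. fact (n i)) * mfps_pow F k n"
    using sum_colourings_prod_fibre_sizes[OF finU] by (simp add: F_def U_def fibre_sizes_blowV)
  finally have "tutteZ U (blow_edges cliques E U) (blow_wt v w) (of_nat k) / (\<Prod>i\<in>UNIV. fact (n i))
      = mfps_pow F k n" by simp
  moreover have "F (\<lambda>_. 0) = 1" by (simp add: F_def blowup_weight_0 simple)
  ultimately show ?thesis by (simp add: mfps_powr_of_nat U_def F_def)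
qed

lemma blowup_tutte_generating_function:
  fixes E :: "'v::finite set set" and v :: "'v set \<Rightarrow> 'a::field_char_0"
  assumes simple: "\<forall>e\<in>E. card e = 2"
  shows "(\<lambda>n. tutteZ (blowV n) (blow_edges cliques E (blowV n)) (blow_wt v w) q / (\<Prod>i\<in>UNIV. fact (n i)))
       = mfps_powr (\<lambda>m. blowup_weight cliques E v w m / (\<Prod>i\<in>UNIV. fact (m i))) q"
proof
  fix n :: "'v \<Rightarrow> nat"
  define F where "F = (\<lambda>m. blowup_weight cliques E v w m / (\<Prod>i\<in>UNIV. fact (m i)) :: 'a)"
  define Es where "Es = blow_edges cliques E (blowV n)"
  define c where "c = (\<Prod>i\<in>UNIV. fact (n i) :: 'a)"
  define p where "p = (\<Sum>A\<in>Pow Es. monom ((\<Prod>e\<in>A. blow_wt v w e) / c) (num_comps (blowV n) A))"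
  define p' where "p' = (\<Sum>j\<le>mdeg n. monom (mfps_pow (mfps_log F) j n / fact j) j)"
  have p: "tutteZ (blowV n) Es (blow_wt v w) x / c = poly p x" for x
    by (simp add: p_def tutteZ_def poly_sum poly_monom sum_divide_distrib mult_ac)
  have p': "mfps_powr F x n = poly p' x" for x
    unfolding p'_def by (rule mfps_powr_eq_poly)
  have "poly p (of_nat k) = poly p' (of_nat k)" for k
    unfolding p[symmetric] p'[symmetric] Es_def c_def F_def by (rule blowup_tutte_of_nat[OF simple])
  then have "p = p'" by (rule poly_eqI_of_nat)
  then show "tutteZ (blowV n) (blow_edges cliques E (blowV n)) (blow_wt v w) q / (\<Prod>i\<in>UNIV. fact (n i))
      = mfps_powr F q n"
    using p p' by (simp add: Es_def c_def)
qed

theorem theorem3p3: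
  fixes E :: "('v::finite) set set"
    and v :: "'v set \<Rightarrow> 'a::field_char_0"
    and w :: "'v \<Rightarrow> 'a"
    and q :: 'a
  assumes simple: "\<forall>e\<in>E. card e = 2"
  shows "(\<lambda>n. tutteZ (blowV n) (blowE E n) (blow_wt v w) q / (\<Prod>i\<in>UNIV. fact (n i)))
           = mfps_powr (\<lambda>n. (\<Prod>e\<in>E. (1 + v e) ^ (\<Prod>i\<in>e. n i)) / (\<Prod>i\<in>UNIV. fact (n i))) q
       \<and> (\<lambda>n. tutteZ (blowV n) (blowE E n \<union> cliqueE n) (blow_wt v w) q / (\<Prod>i\<in>UNIV. fact (n i)))
           = mfps_powr (\<lambda>n. (\<Prod>e\<in>E. (1 + v e) ^ (\<Prod>i\<in>e. n i))
                            * (\<Prod>i\<in>UNIV. (1 + w i) ^ (n i * (n i - 1) div 2))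
                            / (\<Prod>i\<in>UNIV. fact (n i))) q"
  unfolding blowE_Un_cliqueE_eq_blow_edges
  unfolding blowE_eq_blow_edges
  using blowup_tutte_generating_function[OF simple, of False v w q]
        blowup_tutte_generating_function[OF simple, of True v w q]
  by (simp add: blowup_weight_def)

end
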